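(* Let $G\subset\mathfrak{S}_6$ be a subgroup isomorphic to $\mathfrak{S}_5$ that acts transitively on $\{0,1,\ldots,5\}$ (a non-standard $\mathfrak{S}_5$), acting on $\mathbb{P}^4=\{x_0+\cdots+x_5=0\}\subset\mathbb{P}^5$ by permuting the coordinates. Let $\Sigma_{10}\subset\mathbb{P}^4$ be the $\mathfrak{S}_6$-orbit of the point $[-1:-1:-1:1:1:1]$. Let $X$ be a $G$-invariant quartic threefold in $\mathbb{P}^4$ that contains $\Sigma_{10}$. Then $X=X_{\frac{1}{6}}$.
   Context: For $t\in\mathbb{C}$, $X_t\subset\mathbb{P}^4=\{x_0+\cdots+x_5=0\}\subset\mathbb{P}^5$ denotes the quartic threefold given by $\sum_{i=0}^5x_i^4=t\big(\sum_{i=0}^5x_i^2\big)^2$. *)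

theory Defs
  imports Complex_Main "HOL-Algebra.Sym_Groups"
begin

definition Sym :: "nat \<Rightarrow> (nat \<Rightarrow> nat) monoid" where
  "Sym n = \<lparr>carrier = {p. p permutes {..<n}}, mult = (\<circ>), one = id\<rparr>"

text \<open>Points of C^6 are functions nat => complex; only coordinates 0..5 matter.
  The hyperplane P^4 = {x_0 + ... + x_5 = 0} (affine cone).\<close>
definition hyperplane :: "(nat \<Rightarrow> complex) set" where
  "hyperplane = {x. (\<Sum>i<6. x i) = 0}"

definition quartic_exps :: "(nat \<Rightarrow> nat) set" where
  "quartic_exps = {\<alpha>. (\<forall>i\<ge>6. \<alpha> i = 0) \<and> (\<Sum>i<6. \<alpha> i) = 4}"

definition quartic_form :: "((nat \<Rightarrow> complex) \<Rightarrow> complex) \<Rightarrow> bool" where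
  "quartic_form F \<longleftrightarrow> (\<exists>a :: (nat \<Rightarrow> nat) \<Rightarrow> complex.
      \<forall>x. F x = (\<Sum>\<alpha>\<in>quartic_exps. a \<alpha> * (\<Prod>i<6. x i ^ \<alpha> i)))"

definition quartic_threefold_eq :: "((nat \<Rightarrow> complex) \<Rightarrow> complex) \<Rightarrow> bool" where
  "quartic_threefold_eq F \<longleftrightarrow> quartic_form F \<and> (\<exists>x\<in>hyperplane. F x \<noteq> 0)"

definition Xt_eq :: "complex \<Rightarrow> (nat \<Rightarrow> complex) \<Rightarrow> complex" where
  "Xt_eq t x = (\<Sum>i<6. x i ^ 4) - t * (\<Sum>i<6. x i ^ 2)\<^sup>2"

text \<open>The hypersurface {F = 0} is invariant under the coordinate permutation g
  (as a divisor: F composed with g is proportional to F on P^4).\<close>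
definition invariant_under :: "((nat \<Rightarrow> complex) \<Rightarrow> complex) \<Rightarrow> (nat \<Rightarrow> nat) \<Rightarrow> bool" where
  "invariant_under F g \<longleftrightarrow> (\<exists>c. \<forall>x\<in>hyperplane. F (x \<circ> g) = c * F x)"

definition Sigma10 :: "(nat \<Rightarrow> complex) set" where
  "Sigma10 = {(\<lambda>i. (\<lambda>j. if j < 3 then -1 else if j < 6 then 1 else 0) (p i)) | p. p permutes {..<6}}"

end

theory Submission
  imports Defs "HOL-Combinatorics.Permutations"
begin

text \<open>
  Identify the six coordinates with the projective line over \<open>\<bbbF>\<^sub>5\<close>, the coordinate 5 playing the
  role of \<open>\<infinity>\<close>. Using the abstract isomorphism with \<open>\<frakS>\<^sub>5\<close>, a transitive \<open>\<frakS>\<^sub>5 \<subseteq> \<frakS>\<^sub>6\<close> is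
  conjugate to \<open>PGL\<^sub>2(\<bbbF>\<^sub>5)\<close>, generated by \<open>x \<mapsto> x + 1\<close>, \<open>x \<mapsto> 2x\<close> and \<open>x \<mapsto> -1/x\<close>; the
  alternative for the involution gives the standard \<open>\<frakS>\<^sub>5\<close>, which fixes a point.
  This group is sharply 3-transitive. An invariant quartic \<open>X = {F = 0}\<close> gives a character \<open>\<chi>\<close>
  with \<open>F \<circ> g = \<chi>(g) F\<close> on \<open>\<bbbP>\<^sup>4\<close>, and averaging over the group writes \<open>F\<close> as a combination of
  twisted orbit sums of monomials; by 3-transitivity there are five orbit types. If \<open>\<chi>\<close> is the sign,
  every orbit sum vanishes on \<open>\<bbbP>\<^sup>4\<close>, so \<open>\<chi>\<close> is trivial; then each orbit sum is a sum over
  ordered triples of distinct points, which on \<open>\<bbbP>\<^sup>4\<close> is a combination of the power sums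
  \<open>p\<^sub>4\<close> and \<open>p\<^sub>2\<^sup>2\<close>. Finally vanishing at \<open>[-1:-1:-1:1:1:1] \<in> \<Sigma>\<^sub>1\<^sub>0\<close> forces the ratio of
  \<open>X\<^sub>1\<^sub>/\<^sub>6\<close>.
\<close>

section \<open>The Moebius group of \<open>\<bbbP>\<^sup>1(\<bbbF>\<^sub>5)\<close> and its 3-transitivity\<close>

lemma less_six: "(m::nat) < 6 \<longleftrightarrow> m = 0 \<or> m = 1 \<or> m = 2 \<or> m = 3 \<or> m = 4 \<or> m = 5"
  by arith

lemma all_less_six: "(\<forall>m<6::nat. P m) \<longleftrightarrow> P 0 \<and> P 1 \<and> P 2 \<and> P 3 \<and> P 4 \<and> P 5"
  by (simp only: less_six) blast

lemma sum_below_six: "(\<Sum>m<6::nat. f m) = f 0 + f 1 + f 2 + f 3 + f 4 + f 5"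
  by (simp add: numeral_eq_Suc)

lemma fun_eq_below_six:
  fixes f g :: "nat \<Rightarrow> 'a"
  assumes "\<forall>n<6. f n = g n" "\<And>n. 6 \<le> n \<Longrightarrow> f n = g n"
  shows "f = g"
proof
  fix n show "f n = g n" using assms by (cases "n < 6") auto
qed

text \<open>
  Coordinates \<open>0, \<dots>, 4\<close> are the points of \<open>\<bbbF>\<^sub>5\<close> and coordinate 5 is \<open>\<infinity>\<close>; \<open>shift\<close>,
  \<open>double\<close> and \<open>inversion\<close> are the Moebius maps \<open>x \<mapsto> x + 1\<close>, \<open>x \<mapsto> 2x\<close> and \<open>x \<mapsto> -1/x\<close>.
\<close>

definition shift :: "nat \<Rightarrow> nat" where
  "shift n = (if n < 5 then (n + 1) mod 5 else n)"

definition double :: "nat \<Rightarrow> nat" where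
  "double n = (if n < 5 then (2 * n) mod 5 else n)"

definition inversion :: "nat \<Rightarrow> nat" where
  "inversion n = (if n = 0 then 5 else if n = 5 then 0 else if n = 1 then 4 else if n = 4 then 1 else n)"

lemma shift_funpow: "(shift ^^ m) n = (if n < 5 then (n + m) mod 5 else n)"
  by (induction m) (auto simp: shift_def mod_Suc_eq)

lemma double_funpow: "(double ^^ m) n = (if n < 5 then (2 ^ m * n) mod 5 else n)"
  by (induction m) (auto simp: double_def mod_mult_right_eq mult.assoc)

lemma shift_order: "shift ^^ 5 = id"
  by (rule ext) (simp add: shift_funpow)

lemma double_shift: "double \<circ> shift = shift \<circ> shift \<circ> double"
  by (rule fun_eq_below_six) (simp_all add: all_less_six shift_def double_def)

lemma inversion_involution: "inversion \<circ> inversion = id"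
  by (rule fun_eq_below_six) (simp_all add: all_less_six inversion_def)

lemma inversion_double: "inversion \<circ> double \<circ> inversion = double \<circ> double \<circ> double"
  by (rule fun_eq_below_six) (simp_all add: all_less_six inversion_def double_def)

lemma inversion_shift_order: "inversion \<circ> shift \<circ> (inversion \<circ> shift) \<circ> (inversion \<circ> shift) = id"
  by (rule fun_eq_below_six) (simp_all add: all_less_six inversion_def shift_def)

lemma permutes_of_funpow_id:
  assumes "f ^^ Suc k = id" "\<And>n. n \<notin> S \<Longrightarrow> f n = n"
  shows "f permutes S"
  unfolding permutes_def
proof (intro conjI allI impI)
  fix y
  have right: "f ((f ^^ k) z) = z" for z using fun_cong[OF assms(1), of z] by simp
  have left: "(f ^^ k) (f z) = z" for z using fun_cong[OF assms(1), of z] by (simp add: funpow_swap1)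
  show "\<exists>!x. f x = y"
  proof (rule ex1I[of _ "(f ^^ k) y"])
    show "f ((f ^^ k) y) = y" by (rule right)
    show "x = (f ^^ k) y" if "f x = y" for x using left[of x] that by simp
  qed
qed (use assms(2) in blast)

lemma funpow_permutes: "p permutes S \<Longrightarrow> (p ^^ n) permutes S"
  by (induction n) (simp_all add: permutes_id[unfolded id_def] permutes_compose)

lemma shift_permutes: "shift permutes {..<5}"
  using shift_order by (intro permutes_of_funpow_id[where k = 4]) (simp_all add: shift_def)

lemma double_permutes: "double permutes {..<5}"
proof (rule permutes_of_funpow_id[where k = 3])
  have "(double ^^ Suc 3) x = x" for x
  proof (cases "x < 5")
    case True
    then have "x \<in> {0, 1, 2, 3, 4}" by auto
    then show ?thesis by (auto simp: double_funpow)
  qed (simp add: double_funpow)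
  then show "double ^^ Suc 3 = id" by (simp add: fun_eq_iff)
qed (simp add: double_def)

lemma funpow_closed:
  assumes "\<forall>g\<in>S. \<forall>h\<in>S. g \<circ> h \<in> S" "f \<in> S" "0 < m"
  shows "f ^^ m \<in> S"
proof -
  obtain k where "m = Suc k" using \<open>0 < m\<close> gr0_implies_Suc by blast
  then show ?thesis using assms(1,2) by (induction k arbitrary: m) auto
qed

lemma affine_two_transitive:
  assumes closed: "\<forall>g\<in>S. \<forall>h\<in>S. g \<circ> h \<in> S" and "shift \<in> S" "double \<in> S"
    and "j < 5" "l < 5" "j \<noteq> l"
  shows "\<exists>g\<in>S. g 5 = 5 \<and> g j = 0 \<and> g l = 1"
proof -
  define d where "d = (l + (5 - j)) mod 5"
  have "j \<in> {0,1,2,3,4}" "l \<in> {0,1,2,3,4}" using assms(4,5) by auto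
  then have "d \<in> {1,2,3,4}" using \<open>j \<noteq> l\<close> unfolding d_def by auto
  then obtain e where e: "0 < e" "(2 ^ e * d) mod 5 = (1::nat)"
    by (elim insertE emptyE) (use that[of 4] that[of 3] that[of 1] that[of 2] in simp_all)
  define g where "g = double ^^ e \<circ> shift ^^ (5 - j)"
  have "g \<in> S" unfolding g_def using assms(1-4) e(1) by (intro closed[rule_format] funpow_closed) auto
  moreover have "g 5 = 5 \<and> g j = 0 \<and> g l = 1"
    using assms(4,5) e(2) by (simp add: g_def shift_funpow double_funpow d_def)
  ultimately show ?thesis by blast
qed

lemma moves_to_infinity:
  assumes closed: "\<forall>g\<in>S. \<forall>h\<in>S. g \<circ> h \<in> S" and "shift \<in> S" "inversion \<in> S" and "i < 6"
  shows "\<exists>g\<in>S. g i = 5"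
proof (cases "i = 5")
  case True
  then show ?thesis using \<open>shift \<in> S\<close> by (intro bexI[of _ shift]) (simp_all add: shift_def)
next
  case False
  then have "(inversion \<circ> shift ^^ (5 - i)) i = 5" using \<open>i < 6\<close> by (simp add: shift_funpow inversion_def)
  moreover have "inversion \<circ> shift ^^ (5 - i) \<in> S"
    using False \<open>i < 6\<close> by (intro closed[rule_format] funpow_closed[OF closed] assms(2,3)) simp
  ultimately show ?thesis by blast
qed

lemma three_transitive:
  assumes closed: "\<forall>g\<in>S. \<forall>h\<in>S. g \<circ> h \<in> S" and perm: "\<forall>g\<in>S. g permutes {..<6}"
    and "shift \<in> S" "double \<in> S" "inversion \<in> S"
    and "i < 6" "j < 6" "l < 6" "i \<noteq> j" "i \<noteq> l" "j \<noteq> l"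
  shows "\<exists>h\<in>S. h i = 5 \<and> h j = 0 \<and> h l = 1"
proof -
  obtain g where g: "g \<in> S" "g i = 5" using moves_to_infinity[OF closed assms(3,5,6)] by blast
  have gp: "g permutes {..<6}" using perm g(1) by blast
  then have "g j < 6" "g l < 6" "g j \<noteq> g i" "g l \<noteq> g i" "g j \<noteq> g l"
    using assms(7-11) permutes_in_image[OF gp] by (simp_all add: permutes_inj inj_eq)
  then have "g j < 5" "g l < 5" "g j \<noteq> g l" using g(2) by simp_all
  then obtain g' where "g' \<in> S" "g' 5 = 5" "g' (g j) = 0" "g' (g l) = 1"
    using affine_two_transitive[OF closed assms(3,4)] by blast
  then show ?thesis using g closed by (intro bexI[of _ "g' \<circ> g"]) simp_all
qed

section \<open>Power sums, monomials and ordered triples\<close>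

definition distinct_triples :: "'a set \<Rightarrow> ('a \<times> 'a \<times> 'a) set" where
  "distinct_triples I = {(i, j, l). i \<in> I \<and> j \<in> I \<and> l \<in> I \<and> i \<noteq> j \<and> i \<noteq> l \<and> j \<noteq> l}"

lemma sum_distinct_triples:
  fixes f g h :: "'a \<Rightarrow> 'b::comm_ring_1"
  assumes "finite I"
  shows "(\<Sum>(i, j, l)\<in>distinct_triples I. f i * g j * h l)
    = sum f I * sum g I * sum h I - sum (\<lambda>i. f i * g i) I * sum h I - sum (\<lambda>i. f i * h i) I * sum g I
      - sum (\<lambda>i. g i * h i) I * sum f I + 2 * sum (\<lambda>i. f i * g i * h i) I" (is "_ = ?rhs")
proof -
  have triples: "distinct_triples I = Sigma I (\<lambda>i. Sigma (I - {i}) (\<lambda>j. I - {i, j}))"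
    unfolding distinct_triples_def by auto
  have inner: "(\<Sum>l\<in>I - {i, j}. h l) = sum h I - h i - h j" if "i \<in> I" "j \<in> I - {i}" for i j
    using that assms by (subst sum_diff) auto
  have middle: "(\<Sum>j\<in>I - {i}. g j * (sum h I - h i - h j))
      = (sum g I - g i) * (sum h I - h i) - (sum (\<lambda>j. g j * h j) I - g i * h i)" if "i \<in> I" for i
    using that assms by (simp add: right_diff_distrib sum_subtractf sum_distrib_right[symmetric] sum_diff1)
  have "(\<Sum>(i, j, l)\<in>distinct_triples I. f i * g j * h l)
      = (\<Sum>i\<in>I. f i * ((sum g I - g i) * (sum h I - h i) - (sum (\<lambda>j. g j * h j) I - g i * h i)))"
    unfolding triples using assms
    by (simp add: sum.Sigma[symmetric] sum_distrib_left[symmetric] mult.assoc inner middle)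
  also have "\<dots> = (\<Sum>i\<in>I. sum g I * sum h I * f i - sum g I * (f i * h i) - sum h I * (f i * g i)
      - sum (\<lambda>j. g j * h j) I * f i + 2 * (f i * g i * h i))"
    by (rule sum.cong) (simp_all add: algebra_simps)
  also have "\<dots> = ?rhs"
    by (simp only: sum.distrib sum_subtractf sum_distrib_left[symmetric]) (simp add: algebra_simps)
  finally show ?thesis .
qed

lemma card_distinct_triples_6: "card (distinct_triples {..<6::nat}) = 120"
  using sum_distinct_triples[of "{..<6::nat}" "\<lambda>_. 1" "\<lambda>_. 1" "\<lambda>_. 1 :: int"] by simp

definition power_sum :: "nat \<Rightarrow> (nat \<Rightarrow> complex) \<Rightarrow> complex" where
  "power_sum k x = (\<Sum>i<6. x i ^ k)"

lemma power_sum_0 [simp]: "power_sum 0 x = 6"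
  by (simp add: power_sum_def)

lemma power_sum_1_hyperplane: "x \<in> hyperplane \<Longrightarrow> power_sum 1 x = 0"
  by (simp add: power_sum_def hyperplane_def)

lemma sum_distinct_triples_powers:
  "(\<Sum>(i, j, l)\<in>distinct_triples {..<6}. x i ^ a * x j ^ b * x l ^ c)
    = power_sum a x * power_sum b x * power_sum c x - power_sum (a + b) x * power_sum c x
      - power_sum (a + c) x * power_sum b x - power_sum (b + c) x * power_sum a x
      + 2 * power_sum (a + b + c) x"
  using sum_distinct_triples[of "{..<6::nat}" "\<lambda>i. x i ^ a" "\<lambda>i. x i ^ b" "\<lambda>i. x i ^ c"]
  by (simp add: power_sum_def power_add)

lemma hyperplane_comp_permutes: "x \<in> hyperplane \<Longrightarrow> g permutes {..<6} \<Longrightarrow> x \<circ> g \<in> hyperplane"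
  unfolding hyperplane_def using sum.permute[of g "{..<6}" x] by simp

definition monomial :: "(nat \<Rightarrow> nat) \<Rightarrow> (nat \<Rightarrow> complex) \<Rightarrow> complex" where
  "monomial \<alpha> x = (\<Prod>i<6. x i ^ \<alpha> i)"

lemma monomial_raise:
  assumes "m < 6"
  shows "monomial (\<beta>(m := Suc (\<beta> m))) x = x m * monomial \<beta> x"
proof -
  have "monomial (\<beta>(m := Suc (\<beta> m))) x = (\<Prod>i<6. (if i = m then x i else 1) * x i ^ \<beta> i)"
    unfolding monomial_def by (rule prod.cong) simp_all
  then show ?thesis using assms by (simp add: prod.distrib monomial_def)
qed

lemma monomial_comp_permutes:
  assumes "h permutes {..<6}"
  shows "monomial (\<alpha> \<circ> h) y = monomial \<alpha> (y \<circ> Hilbert_Choice.inv h)"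
  unfolding monomial_def
  using prod.permute[OF assms, of "\<lambda>i. y (Hilbert_Choice.inv h i) ^ \<alpha> i"]
  by (simp add: permutes_inverses(2)[OF assms])

lemma sum_monomial_raise_hyperplane:
  "x \<in> hyperplane \<Longrightarrow> (\<Sum>m<6. monomial (\<beta>(m := Suc (\<beta> m))) x) = 0"
  by (simp add: monomial_raise sum_distrib_right[symmetric] hyperplane_def)

definition power_sum_combination :: "((nat \<Rightarrow> complex) \<Rightarrow> complex) \<Rightarrow> bool" where
  "power_sum_combination q \<longleftrightarrow> (\<exists>u v. \<forall>x\<in>hyperplane. q x = u * power_sum 4 x + v * power_sum 2 x ^ 2)"

lemma power_sum_combinationI:
  "(\<And>x. x \<in> hyperplane \<Longrightarrow> q x = u * power_sum 4 x + v * power_sum 2 x ^ 2) \<Longrightarrow> power_sum_combination q"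
  unfolding power_sum_combination_def by blast

lemma power_sum_combination_scale:
  "power_sum_combination q \<Longrightarrow> power_sum_combination (\<lambda>x. c * q x)"
proof -
  assume "power_sum_combination q"
  then obtain u v where "\<forall>x\<in>hyperplane. q x = u * power_sum 4 x + v * power_sum 2 x ^ 2"
    unfolding power_sum_combination_def by blast
  then show ?thesis unfolding power_sum_combination_def
    by (intro exI[of _ "c * u"] exI[of _ "c * v"]) (simp add: algebra_simps)
qed

lemma power_sum_combination_sum:
  assumes "\<And>\<alpha>. \<alpha> \<in> A \<Longrightarrow> power_sum_combination (f \<alpha>)"
  shows "power_sum_combination (\<lambda>x. \<Sum>\<alpha>\<in>A. f \<alpha> x)"
proof (cases "finite A")
  case True
  then show ?thesis using assms
  proof (induction A)
    case empty
    then show ?case unfolding power_sum_combination_def by (intro exI[of _ 0]) simp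
  next
    case (insert \<alpha> A)
    then obtain u v u' v' where "\<forall>x\<in>hyperplane. f \<alpha> x = u * power_sum 4 x + v * power_sum 2 x ^ 2"
      "\<forall>x\<in>hyperplane. (\<Sum>\<alpha>\<in>A. f \<alpha> x) = u' * power_sum 4 x + v' * power_sum 2 x ^ 2"
      unfolding power_sum_combination_def by blast
    then show ?case unfolding power_sum_combination_def using insert(1,2)
      by (intro exI[of _ "u + u'"] exI[of _ "v + v'"]) (simp add: algebra_simps)
  qed
next
  case False
  then show ?thesis unfolding power_sum_combination_def by (intro exI[of _ 0]) simp
qed

section \<open>Orbit types of quartic monomials\<close>

definition quartic_types :: "(nat \<times> nat \<times> nat \<times> nat) set" where
  "quartic_types = {(4, 0, 0, 0), (3, 1, 0, 0), (2, 2, 0, 0), (2, 1, 1, 0), (0, 0, 1, 1)}"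

lemma decreasing_partitions_of_4:
  fixes y0 y1 y2 y3 y4 y5 :: nat
  assumes "y5 \<le> y4" "y4 \<le> y3" "y3 \<le> y2" "y2 \<le> y1" "y1 \<le> y0" "y0 + y1 + y2 + y3 + y4 + y5 = 4"
  shows "[y0, y1, y2, y3, y4, y5] \<in>
    {[4, 0, 0, 0, 0, 0], [3, 1, 0, 0, 0, 0], [2, 2, 0, 0, 0, 0], [2, 1, 1, 0, 0, 0], [1, 1, 1, 1, 0, 0]}"
proof -
  have "y0 \<in> {0, 1, 2, 3, 4}" using assms by auto
  then show ?thesis using assms by (elim insertE emptyE) (simp; arith)+
qed

lemma sorting_permutation:
  fixes \<alpha> :: "nat \<Rightarrow> nat"
  obtains p where "p permutes {..<n}" "sorted (rev (map (\<alpha> \<circ> p) [0..<n]))"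
proof -
  define ys where "ys = rev (sort (map \<alpha> [0..<n]))"
  obtain p where p: "p permutes {..<n}" "permute_list p (map \<alpha> [0..<n]) = ys"
    using mset_eq_permutation[of ys "map \<alpha> [0..<n]"] by (auto simp: ys_def)
  have "p i < n" if "i < n" for i using permutes_in_image[OF p(1)] that by simp
  then have "map (\<alpha> \<circ> p) [0..<n] = ys" using p(2) by (auto simp: permute_list_def)
  then show ?thesis using that p(1) by (simp add: ys_def)
qed

definition placed_exps :: "nat \<Rightarrow> nat \<Rightarrow> nat \<Rightarrow> nat \<times> nat \<times> nat \<times> nat \<Rightarrow> nat \<Rightarrow> nat" where
  "placed_exps i j l t n = (case t of (a, b, c, d) \<Rightarrow>
     if n = i then a else if n = j then b else if n = l then c else if n < 6 then d else 0)"

lemma placed_exps_comp_permutes: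
  assumes "p permutes {..<6}" "i < 6" "j < 6" "l < 6"
  shows "placed_exps (p i) (p j) (p l) t \<circ> p = placed_exps i j l t"
proof
  fix n
  have "p n < 6 \<longleftrightarrow> n < 6" using permutes_in_image[OF assms(1)] by simp
  then show "(placed_exps (p i) (p j) (p l) t \<circ> p) n = placed_exps i j l t n"
    using permutes_inj[OF assms(1)] by (simp add: placed_exps_def inj_eq split: prod.split)
qed

lemma quartic_exps_sorted:
  assumes "\<alpha> \<in> quartic_exps"
  obtains p t i j l where "p permutes {..<6}" "t \<in> quartic_types"
    "i < 6" "j < 6" "l < 6" "i \<noteq> j" "i \<noteq> l" "j \<noteq> l" "\<forall>m<6. \<alpha> (p m) = placed_exps i j l t m"
proof -
  obtain p where p: "p permutes {..<6}" "sorted (rev (map (\<alpha> \<circ> p) [0..<6]))"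
    using sorting_permutation .
  have "(\<Sum>m<6. \<alpha> (p m)) = 4"
    using assms sum.permute[OF p(1), of \<alpha>] by (simp add: quartic_exps_def)
  then have "[\<alpha> (p 0), \<alpha> (p 1), \<alpha> (p 2), \<alpha> (p 3), \<alpha> (p 4), \<alpha> (p 5)] \<in>
    {[4, 0, 0, 0, 0, 0], [3, 1, 0, 0, 0, 0], [2, 2, 0, 0, 0, 0], [2, 1, 1, 0, 0, 0], [1, 1, 1, 1, 0, 0]}"
    using p(2) by (intro decreasing_partitions_of_4) (simp_all add: upt_rec numeral_eq_Suc)
  then consider
      "\<alpha> (p 3) = \<alpha> (p 4)" "\<alpha> (p 4) = \<alpha> (p 5)" "(\<alpha> (p 0), \<alpha> (p 1), \<alpha> (p 2), \<alpha> (p 3)) \<in> quartic_types"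
    | "[\<alpha> (p 0), \<alpha> (p 1), \<alpha> (p 2), \<alpha> (p 3), \<alpha> (p 4), \<alpha> (p 5)] = [1, 1, 1, 1, 0, 0]"
    by (auto simp: quartic_types_def)
  then obtain t i j l where t: "t \<in> quartic_types" "i < 6" "j < 6" "l < 6" "i \<noteq> j" "i \<noteq> l" "j \<noteq> l"
    and on_p: "\<forall>m<6. \<alpha> (p m) = placed_exps i j l t m"
  proof cases
    case 1
    then show thesis
      by (intro that[of "(\<alpha> (p 0), \<alpha> (p 1), \<alpha> (p 2), \<alpha> (p 3))" 0 1 2]) (simp_all add: placed_exps_def all_less_six)
  next
    case 2
    then show thesis
      by (intro that[of "(0, 0, 1, 1)" 5 4 0]) (simp_all add: quartic_types_def placed_exps_def all_less_six)
  qed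
  then show ?thesis using that p(1) by blast
qed

lemma quartic_exps_classification:
  assumes "\<alpha> \<in> quartic_exps"
  obtains t i j l where "t \<in> quartic_types" "i < 6" "j < 6" "l < 6" "i \<noteq> j" "i \<noteq> l" "j \<noteq> l"
    and "\<alpha> = placed_exps i j l t"
proof -
  obtain p t i j l where p: "p permutes {..<6}" and t: "t \<in> quartic_types"
    "i < 6" "j < 6" "l < 6" "i \<noteq> j" "i \<noteq> l" "j \<noteq> l" and on_p: "\<forall>m<6. \<alpha> (p m) = placed_exps i j l t m"
    using quartic_exps_sorted[OF assms] .
  have "\<alpha> = placed_exps (p i) (p j) (p l) t"
  proof
    fix n
    show "\<alpha> n = placed_exps (p i) (p j) (p l) t n"
    proof (cases "n < 6")
      case True
      have "Hilbert_Choice.inv p n < 6" using True permutes_in_image[OF permutes_inv[OF p]] by simp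
      then obtain m where "m < 6" "n = p m" using permutes_inverses(1)[OF p] by metis
      then show ?thesis using on_p placed_exps_comp_permutes[OF p t(2-4), of t] by (metis comp_apply)
    next
      case False
      then show ?thesis using assms t(2-4) permutes_in_image[OF p] by (auto simp: quartic_exps_def placed_exps_def split: prod.split)
    qed
  qed
  moreover have "p i < 6" "p j < 6" "p l < 6" "p i \<noteq> p j" "p i \<noteq> p l" "p j \<noteq> p l"
    using t(2-7) permutes_in_image[OF p] permutes_inj[OF p] by (simp_all add: inj_eq)
  ultimately show ?thesis using that t(1) by blast
qed

section \<open>Semi-invariant quartics under a Moebius group of order 120\<close>

definition perm_group :: "'a set \<Rightarrow> ('a \<Rightarrow> 'a) set \<Rightarrow> bool" where
  "perm_group S G \<longleftrightarrow> (\<forall>g\<in>G. g permutes S) \<and> id \<in> G \<and> (\<forall>g\<in>G. \<forall>h\<in>G. g \<circ> h \<in> G)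
     \<and> (\<forall>g\<in>G. Hilbert_Choice.inv g \<in> G)"

locale semi_invariant_quartic =
  fixes G :: "(nat \<Rightarrow> nat) set" and F :: "(nat \<Rightarrow> complex) \<Rightarrow> complex"
  assumes perm_group: "perm_group {..<6} G" and card_G: "card G = 120"
    and shift_in: "shift \<in> G" and double_in: "double \<in> G" and inversion_in: "inversion \<in> G"
    and quartic: "quartic_form F" and semi_invariant: "\<forall>g\<in>G. invariant_under F g"
    and nonzero: "\<exists>x\<in>hyperplane. F x \<noteq> 0"
begin

lemma permutes_G: "g \<in> G \<Longrightarrow> g permutes {..<6}"
  and id_in: "id \<in> G"
  and comp_in: "g \<in> G \<Longrightarrow> h \<in> G \<Longrightarrow> g \<circ> h \<in> G"
  and inv_in: "g \<in> G \<Longrightarrow> Hilbert_Choice.inv g \<in> G"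
  using perm_group by (auto simp: perm_group_def)

lemma finite_G: "finite G"
  using card_G card.infinite by fastforce

lemma three_transitive_G:
  "i < 6 \<Longrightarrow> j < 6 \<Longrightarrow> l < 6 \<Longrightarrow> i \<noteq> j \<Longrightarrow> i \<noteq> l \<Longrightarrow> j \<noteq> l \<Longrightarrow> \<exists>h\<in>G. h i = 5 \<and> h j = 0 \<and> h l = 1"
  by (rule three_transitive) (use comp_in permutes_G shift_in double_in inversion_in in auto)

lemma generated_by_mobius:
  assumes "S \<subseteq> G" "\<forall>g\<in>S. \<forall>h\<in>S. g \<circ> h \<in> S" "shift \<in> S" "double \<in> S" "inversion \<in> S"
  shows "S = G"
proof (rule card_subset_eq[OF finite_G assms(1)])
  let ?preimages = "\<lambda>h. (Hilbert_Choice.inv h 5, Hilbert_Choice.inv h 0, Hilbert_Choice.inv h 1)"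
  have "distinct_triples {..<6} \<subseteq> ?preimages ` S"
  proof
    fix t assume "t \<in> distinct_triples {..<6::nat}"
    then obtain i j l where t: "t = (i, j, l)" "i < 6" "j < 6" "l < 6" "i \<noteq> j" "i \<noteq> l" "j \<noteq> l"
      by (auto simp: distinct_triples_def)
    then obtain h where h: "h \<in> S" "h i = 5" "h j = 0" "h l = 1"
      using three_transitive[OF assms(2) _ assms(3-5)] assms(1) permutes_G by blast
    then have "?preimages h = t"
      using permutes_inverses(2)[OF permutes_G] assms(1) t(1) by (metis subsetD)
    then show "t \<in> ?preimages ` S" using h(1) by blast
  qed
  moreover have "finite S" using finite_subset[OF assms(1) finite_G] .
  ultimately have "card (distinct_triples {..<6::nat}) \<le> card S"
    by (meson card_image_le card_mono finite_imageI order.trans)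
  then have "120 \<le> card S" by (simp add: card_distinct_triples_6)
  then show "card S = card G" using card_G card_mono[OF finite_G assms(1)] by simp
qed

lemma bij_triple: "bij_betw (\<lambda>g. (g 5, g 0, g 1)) G (distinct_triples {..<6})"
proof -
  have "(\<lambda>g. (g 5, g 0, g 1)) ` G = distinct_triples {..<6}"
  proof (intro equalityI subsetI)
    fix t assume "t \<in> (\<lambda>g. (g 5, g 0, g 1)) ` G"
    then obtain g where "g \<in> G" "t = (g 5, g 0, g 1)" by blast
    then show "t \<in> distinct_triples {..<6}"
      using permutes_in_image[OF permutes_G] permutes_inj[OF permutes_G]
      by (auto simp: distinct_triples_def inj_eq)
  next
    fix t assume "t \<in> distinct_triples {..<6::nat}"
    then obtain i j l where t: "t = (i, j, l)" "i < 6" "j < 6" "l < 6" "i \<noteq> j" "i \<noteq> l" "j \<noteq> l"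
      by (auto simp: distinct_triples_def)
    then obtain h where h: "h \<in> G" "h i = 5" "h j = 0" "h l = 1" using three_transitive_G by blast
    then have "t = (Hilbert_Choice.inv h 5, Hilbert_Choice.inv h 0, Hilbert_Choice.inv h 1)"
      using permutes_inverses(2)[OF permutes_G[OF h(1)]] t(1) by metis
    then show "t \<in> (\<lambda>g. (g 5, g 0, g 1)) ` G" using inv_in[OF h(1)] by blast
  qed
  moreover have "card G = card (distinct_triples {..<6::nat})"
    using card_G card_distinct_triples_6 by simp
  ultimately show ?thesis using finite_G by (simp add: bij_betw_def inj_on_iff_eq_card)
qed

definition character :: "(nat \<Rightarrow> nat) \<Rightarrow> complex" where
  "character g = (SOME c. \<forall>x\<in>hyperplane. F (x \<circ> g) = c * F x)"

lemma F_comp: "g \<in> G \<Longrightarrow> x \<in> hyperplane \<Longrightarrow> F (x \<circ> g) = character g * F x"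
  using someI_ex[of "\<lambda>c. \<forall>x\<in>hyperplane. F (x \<circ> g) = c * F x"] semi_invariant
  unfolding character_def invariant_under_def by blast

lemma character_comp:
  assumes "g \<in> G" "h \<in> G"
  shows "character (g \<circ> h) = character g * character h"
proof -
  obtain x where x: "x \<in> hyperplane" "F x \<noteq> 0" using nonzero by blast
  have "character (g \<circ> h) * F x = F ((x \<circ> g) \<circ> h)"
    using F_comp[OF comp_in[OF assms] x(1)] by (simp add: comp_assoc)
  also have "\<dots> = character g * character h * F x"
    using F_comp[OF assms(2) hyperplane_comp_permutes[OF x(1) permutes_G[OF assms(1)]]] F_comp[OF assms(1) x(1)]
    by simp
  finally show ?thesis using x(2) by simp
qed

lemma character_id: "character id = 1"
  using F_comp[OF id_in] nonzero by (metis comp_id mult_cancel_right2)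

lemma character_nonzero: "g \<in> G \<Longrightarrow> character g \<noteq> 0"
  using character_comp[OF _ inv_in] character_id permutes_inv_o(1)[OF permutes_G] by (metis mult_zero_left zero_neq_one)

lemma character_shift: "character shift = 1"
proof -
  have "character double * character shift = character shift * character shift * character double"
    using arg_cong[OF double_shift, of character] by (simp add: character_comp comp_in shift_in double_in)
  then show ?thesis using character_nonzero[OF shift_in] character_nonzero[OF double_in] by simp
qed

lemma character_inversion: "character inversion = 1"
proof -
  have "character inversion * character inversion = 1"
    using arg_cong[OF inversion_involution, of character] by (simp add: character_comp inversion_in character_id)
  moreover have "character inversion * character inversion * character inversion = 1"
    using arg_cong[OF inversion_shift_order, of character]
    by (simp add: character_comp comp_in shift_in inversion_in character_id character_shift)
  ultimately show ?thesis by simp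
qed

lemma character_double_square: "character double ^ 2 = 1"
proof -
  have "character double = character double * character double * character double"
    using arg_cong[OF inversion_double, of character]
    by (simp add: character_comp comp_in double_in inversion_in character_inversion)
  then show ?thesis using character_nonzero[OF double_in] by (simp add: power2_eq_square)
qed

lemma character_square: "g \<in> G \<Longrightarrow> character g ^ 2 = 1"
  using generated_by_mobius[of "{g \<in> G. character g ^ 2 = 1}"]
  by (auto simp: comp_in character_comp power_mult_distrib shift_in double_in inversion_in
      character_shift character_inversion character_double_square)

lemma character_trivial: "character double = 1 \<Longrightarrow> g \<in> G \<Longrightarrow> character g = 1"
  using generated_by_mobius[of "{g \<in> G. character g = 1}"]
  by (auto simp: comp_in character_comp shift_in double_in inversion_in character_shift character_inversion)

definition reynolds :: "(nat \<Rightarrow> nat) \<Rightarrow> (nat \<Rightarrow> complex) \<Rightarrow> complex" where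
  "reynolds \<alpha> x = (\<Sum>g\<in>G. character g * monomial \<alpha> (x \<circ> g))"

lemma F_reynolds_expansion: "\<exists>a. \<forall>x\<in>hyperplane. F x = (\<Sum>\<alpha>\<in>quartic_exps. a \<alpha> * reynolds \<alpha> x)"
proof -
  obtain a where "\<forall>x. F x = (\<Sum>\<alpha>\<in>quartic_exps. a \<alpha> * (\<Prod>i<6. x i ^ \<alpha> i))"
    using quartic unfolding quartic_form_def by blast
  then have a: "\<And>x. F x = (\<Sum>\<alpha>\<in>quartic_exps. a \<alpha> * monomial \<alpha> x)"
    by (simp add: monomial_def)
  have "F x = (\<Sum>\<alpha>\<in>quartic_exps. a \<alpha> / 120 * reynolds \<alpha> x)" if x: "x \<in> hyperplane" for x
  proof -
    have "120 * F x = (\<Sum>g\<in>G. character g * F (x \<circ> g))"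
      using F_comp[OF _ x] character_square card_G
      by (simp add: mult.assoc[symmetric] power2_eq_square)
    also have "\<dots> = (\<Sum>\<alpha>\<in>quartic_exps. a \<alpha> * reynolds \<alpha> x)"
      unfolding a[of "x \<circ> _"] reynolds_def sum_distrib_left
      by (subst sum.swap) (simp add: ac_simps)
    finally show ?thesis by (simp add: sum_divide_distrib[symmetric] field_simps)
  qed
  then show ?thesis by (intro exI[of _ "\<lambda>\<alpha>. a \<alpha> / 120"]) simp
qed

lemma reynolds_comp:
  assumes h: "h \<in> G"
  shows "reynolds (\<alpha> \<circ> h) x = character h * reynolds \<alpha> x"
proof -
  let ?h' = "Hilbert_Choice.inv h"
  have hp: "h permutes {..<6}" using permutes_G[OF h] .
  have "reynolds (\<alpha> \<circ> h) x = (\<Sum>g\<in>G. character g * monomial \<alpha> (x \<circ> (g \<circ> ?h')))"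
    unfolding reynolds_def monomial_comp_permutes[OF hp] by (simp add: comp_assoc)
  also have "\<dots> = (\<Sum>g\<in>G. character (g \<circ> h) * monomial \<alpha> (x \<circ> g))"
    by (rule sum.reindex_bij_witness[where j = "\<lambda>g. g \<circ> ?h'" and i = "\<lambda>g. g \<circ> h"])
       (auto simp: comp_assoc permutes_inv_o[OF hp] comp_in inv_in h)
  also have "\<dots> = character h * reynolds \<alpha> x"
    unfolding reynolds_def sum_distrib_left by (simp add: character_comp h ac_simps)
  finally show ?thesis .
qed

lemma placed_exps_orbit:
  assumes "i < 6" "j < 6" "l < 6" "i \<noteq> j" "i \<noteq> l" "j \<noteq> l"
  shows "\<exists>h\<in>G. placed_exps i j l t = placed_exps 5 0 1 t \<circ> h"
proof -
  obtain h where h: "h \<in> G" "h i = 5" "h j = 0" "h l = 1" using three_transitive_G[OF assms] by blast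
  then show ?thesis using placed_exps_comp_permutes[OF permutes_G[OF h(1)] assms(1-3), of t] by metis
qed

lemma quartic_exps_orbit: "\<alpha> \<in> quartic_exps \<Longrightarrow> \<exists>t\<in>quartic_types. \<exists>h\<in>G. \<alpha> = placed_exps 5 0 1 t \<circ> h"
  by (metis quartic_exps_classification placed_exps_orbit)

text \<open>
  On the hyperplane \<open>x\<^sub>5 x\<^sub>0 x\<^sub>1 (x\<^sub>0 + \<dots> + x\<^sub>5) = 0\<close>; the six monomials in this product
  lie in the orbits of the types \<open>(2, 1, 1, 0)\<close> and \<open>(0, 0, 1, 1)\<close>.
\<close>

lemma reynolds_relation:
  obtains h0 h1 h2 h3 h4 where "h0 \<in> G" "h1 \<in> G" "h2 \<in> G" "h3 \<in> G" "h4 \<in> G"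
    "\<And>x. x \<in> hyperplane \<Longrightarrow> (1 + character h0 + character h1) * reynolds (placed_exps 5 0 1 (2, 1, 1, 0)) x
      + (character h2 + character h3 + character h4) * reynolds (placed_exps 5 0 1 (0, 0, 1, 1)) x = 0"
proof -
  define \<beta> where "\<beta> = placed_exps 5 0 1 (1, 1, 1, 0)"
  obtain h0 where h0: "h0 \<in> G" "placed_exps 0 5 1 (2, 1, 1, 0) = placed_exps 5 0 1 (2, 1, 1, 0) \<circ> h0"
    using placed_exps_orbit[of 0 5 1 "(2, 1, 1, 0)"] by auto
  obtain h1 where h1: "h1 \<in> G" "placed_exps 1 5 0 (2, 1, 1, 0) = placed_exps 5 0 1 (2, 1, 1, 0) \<circ> h1"
    using placed_exps_orbit[of 1 5 0 "(2, 1, 1, 0)"] by auto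
  obtain h2 where h2: "h2 \<in> G" "placed_exps 3 4 0 (0, 0, 1, 1) = placed_exps 5 0 1 (0, 0, 1, 1) \<circ> h2"
    using placed_exps_orbit[of 3 4 0 "(0, 0, 1, 1)"] by auto
  obtain h3 where h3: "h3 \<in> G" "placed_exps 2 4 0 (0, 0, 1, 1) = placed_exps 5 0 1 (0, 0, 1, 1) \<circ> h3"
    using placed_exps_orbit[of 2 4 0 "(0, 0, 1, 1)"] by auto
  obtain h4 where h4: "h4 \<in> G" "placed_exps 2 3 0 (0, 0, 1, 1) = placed_exps 5 0 1 (0, 0, 1, 1) \<circ> h4"
    using placed_exps_orbit[of 2 3 0 "(0, 0, 1, 1)"] by auto
  have raised: "\<beta>(0 := Suc (\<beta> 0)) = placed_exps 0 5 1 (2, 1, 1, 0)" "\<beta>(1 := Suc (\<beta> 1)) = placed_exps 1 5 0 (2, 1, 1, 0)"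
    "\<beta>(2 := Suc (\<beta> 2)) = placed_exps 3 4 0 (0, 0, 1, 1)" "\<beta>(3 := Suc (\<beta> 3)) = placed_exps 2 4 0 (0, 0, 1, 1)"
    "\<beta>(4 := Suc (\<beta> 4)) = placed_exps 2 3 0 (0, 0, 1, 1)" "\<beta>(5 := Suc (\<beta> 5)) = placed_exps 5 0 1 (2, 1, 1, 0)"
    by (auto simp: \<beta>_def placed_exps_def fun_eq_iff)
  show ?thesis
  proof (rule that[OF h0(1) h1(1) h2(1) h3(1) h4(1)])
    fix x assume x: "x \<in> hyperplane"
    have "(\<Sum>m<6. reynolds (\<beta>(m := Suc (\<beta> m))) x) = 0"
      using sum_monomial_raise_hyperplane[OF hyperplane_comp_permutes[OF x permutes_G]]
      unfolding reynolds_def by (subst sum.swap) (simp add: sum_distrib_left[symmetric])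
    then show "(1 + character h0 + character h1) * reynolds (placed_exps 5 0 1 (2, 1, 1, 0)) x
      + (character h2 + character h3 + character h4) * reynolds (placed_exps 5 0 1 (0, 0, 1, 1)) x = 0"
      unfolding sum_below_six raised h0(2) h1(2) h2(2) h3(2) h4(2)
      by (simp add: reynolds_comp h0(1) h1(1) h2(1) h3(1) h4(1) algebra_simps)
  qed
qed

lemma reynolds_twisted_vanishes:
  assumes twisted: "character double = -1" and t: "t \<in> quartic_types" and x: "x \<in> hyperplane"
  shows "reynolds (placed_exps 5 0 1 t) x = 0"
proof -
  \<comment> \<open>All types but \<open>(2, 1, 1, 0)\<close> are fixed by \<open>double\<close>, whose character is \<open>-1\<close>.\<close>
  have fixed: "reynolds (placed_exps 5 0 1 (a, b, c, c)) y = 0" for a b c y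
  proof -
    have "placed_exps 5 0 1 (a, b, c, c) \<circ> double = placed_exps 5 0 1 (a, b, c, c)"
      by (rule fun_eq_below_six) (simp_all add: all_less_six placed_exps_def double_def)
    then have "reynolds (placed_exps 5 0 1 (a, b, c, c)) y = - reynolds (placed_exps 5 0 1 (a, b, c, c)) y"
      using reynolds_comp[OF double_in, of "placed_exps 5 0 1 (a, b, c, c)" y] twisted by simp
    then show ?thesis by simp
  qed
  obtain h0 h1 h2 h3 h4 where h: "h0 \<in> G" "h1 \<in> G"
    and relation: "(1 + character h0 + character h1) * reynolds (placed_exps 5 0 1 (2, 1, 1, 0)) x
      + (character h2 + character h3 + character h4) * reynolds (placed_exps 5 0 1 (0, 0, 1, 1)) x = 0"
    using reynolds_relation x by metis
  have "character h0 \<in> {1, -1}" "character h1 \<in> {1, -1}"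
    using character_square h by (auto simp: power2_eq_1_iff)
  then have "1 + character h0 + character h1 \<noteq> 0" by auto
  then have "reynolds (placed_exps 5 0 1 (2, 1, 1, 0)) x = 0" using relation fixed by simp
  then show ?thesis using t fixed by (auto simp: quartic_types_def)
qed

lemma monomial_placed_exps_triple: "monomial (placed_exps 5 0 1 (a, b, c, 0)) y = y 5 ^ a * y 0 ^ b * y 1 ^ c"
  by (simp add: monomial_def placed_exps_def numeral_eq_Suc)

lemma reynolds_trivial_triple_sum:
  assumes "character double = 1"
  shows "reynolds (placed_exps 5 0 1 (a, b, c, 0)) x
    = (\<Sum>(i, j, l)\<in>distinct_triples {..<6}. x i ^ a * x j ^ b * x l ^ c)"
  unfolding reynolds_def monomial_placed_exps_triple
  using sum.reindex_bij_betw[OF bij_triple, of "\<lambda>(i, j, l). x i ^ a * x j ^ b * x l ^ c"]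
  by (simp add: character_trivial[OF assms])

lemma reynolds_trivial_combination:
  assumes trivial: "character double = 1" and t: "t \<in> quartic_types"
  shows "power_sum_combination (reynolds (placed_exps 5 0 1 t))"
proof -
  have triple: "reynolds (placed_exps 5 0 1 (a, b, c, 0)) x
      = power_sum a x * power_sum b x * power_sum c x - power_sum (a + b) x * power_sum c x
        - power_sum (a + c) x * power_sum b x - power_sum (b + c) x * power_sum a x
        + 2 * power_sum (a + b + c) x" for a b c x
    using reynolds_trivial_triple_sum[OF trivial] sum_distinct_triples_powers by simp
  have type_values: "reynolds (placed_exps 5 0 1 (4, 0, 0, 0)) x = 20 * power_sum 4 x + 0 * power_sum 2 x ^ 2"
    "reynolds (placed_exps 5 0 1 (3, 1, 0, 0)) x = -4 * power_sum 4 x + 0 * power_sum 2 x ^ 2"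
    "reynolds (placed_exps 5 0 1 (2, 2, 0, 0)) x = -4 * power_sum 4 x + 4 * power_sum 2 x ^ 2"
    "reynolds (placed_exps 5 0 1 (2, 1, 1, 0)) x = 2 * power_sum 4 x + -1 * power_sum 2 x ^ 2"
    if "x \<in> hyperplane" for x
    unfolding triple using power_sum_1_hyperplane[OF that] by (simp_all add: power2_eq_square numeral_2_eq_2[symmetric])
  have "power_sum_combination (reynolds (placed_exps 5 0 1 (4, 0, 0, 0)))"
    "power_sum_combination (reynolds (placed_exps 5 0 1 (3, 1, 0, 0)))"
    "power_sum_combination (reynolds (placed_exps 5 0 1 (2, 2, 0, 0)))"
    "power_sum_combination (reynolds (placed_exps 5 0 1 (2, 1, 1, 0)))"
    by (rule power_sum_combinationI, rule type_values, assumption)+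
  moreover have "power_sum_combination (reynolds (placed_exps 5 0 1 (0, 0, 1, 1)))"
  proof -
    obtain h0 h1 h2 h3 h4 where "h0 \<in> G" "h1 \<in> G" "h2 \<in> G" "h3 \<in> G" "h4 \<in> G"
      and relation: "\<And>x. x \<in> hyperplane \<Longrightarrow> (1 + character h0 + character h1) * reynolds (placed_exps 5 0 1 (2, 1, 1, 0)) x
        + (character h2 + character h3 + character h4) * reynolds (placed_exps 5 0 1 (0, 0, 1, 1)) x = 0"
      using reynolds_relation by metis
    then have "3 * (reynolds (placed_exps 5 0 1 (2, 1, 1, 0)) x + reynolds (placed_exps 5 0 1 (0, 0, 1, 1)) x) = 0"
      if "x \<in> hyperplane" for x
      using relation[OF that] character_trivial[OF trivial] by (simp add: distrib_left)
    then have "reynolds (placed_exps 5 0 1 (0, 0, 1, 1)) x = - reynolds (placed_exps 5 0 1 (2, 1, 1, 0)) x"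
      if "x \<in> hyperplane" for x
      using that by (simp add: add_eq_0_iff)
    then show ?thesis using type_values(4) by (intro power_sum_combinationI[of _ "-2" 1]) simp
  qed
  ultimately show ?thesis using t by (auto simp: quartic_types_def)
qed

lemma character_double_trivial: "character double = 1"
proof (rule ccontr)
  assume "character double \<noteq> 1"
  then have "character double = -1" using character_double_square by (simp add: power2_eq_1_iff)
  then have "reynolds \<alpha> x = 0" if "\<alpha> \<in> quartic_exps" "x \<in> hyperplane" for \<alpha> x
    using quartic_exps_orbit[OF that(1)] reynolds_comp reynolds_twisted_vanishes that(2) by fastforce
  moreover obtain a where "\<forall>x\<in>hyperplane. F x = (\<Sum>\<alpha>\<in>quartic_exps. a \<alpha> * reynolds \<alpha> x)"
    using F_reynolds_expansion by blast
  ultimately have "F x = 0" if "x \<in> hyperplane" for x using that by simp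
  then show False using nonzero by blast
qed

lemma power_sum_combination_F: "power_sum_combination F"
proof -
  obtain a where F: "\<forall>x\<in>hyperplane. F x = (\<Sum>\<alpha>\<in>quartic_exps. a \<alpha> * reynolds \<alpha> x)"
    using F_reynolds_expansion by blast
  have "power_sum_combination (\<lambda>x. \<Sum>\<alpha>\<in>quartic_exps. a \<alpha> * reynolds \<alpha> x)"
  proof (intro power_sum_combination_sum power_sum_combination_scale)
    fix \<alpha> assume "\<alpha> \<in> quartic_exps"
    then obtain t h where "t \<in> quartic_types" "h \<in> G" "\<alpha> = placed_exps 5 0 1 t \<circ> h"
      using quartic_exps_orbit by blast
    then have "reynolds \<alpha> = (\<lambda>x. character h * reynolds (placed_exps 5 0 1 t) x)"
      using reynolds_comp by auto
    then show "power_sum_combination (reynolds \<alpha>)"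
      using reynolds_trivial_combination[OF character_double_trivial \<open>t \<in> quartic_types\<close>]
        power_sum_combination_scale by simp
  qed
  then show ?thesis using F unfolding power_sum_combination_def by simp
qed

theorem equals_Xt_sixth:
  assumes "F (\<lambda>i. if i < 3 then -1 else if i < 6 then 1 else 0) = 0"
  shows "\<exists>c. c \<noteq> 0 \<and> (\<forall>x\<in>hyperplane. F x = c * Xt_eq (1/6) x)"
proof -
  obtain u v where uv: "\<forall>x\<in>hyperplane. F x = u * power_sum 4 x + v * power_sum 2 x ^ 2"
    using power_sum_combination_F unfolding power_sum_combination_def by blast
  let ?q = "\<lambda>i. if i < 3 then -1 else if i < 6 then 1 else 0 :: complex"
  have "?q \<in> hyperplane" "power_sum 4 ?q = 6" "power_sum 2 ?q = 6"
    by (simp_all add: hyperplane_def power_sum_def numeral_eq_Suc)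
  then have "u * 6 + v * 36 = 0" using uv assms by simp
  then have "v = - u / 6" by (simp add: field_simps add_eq_0_iff)
  then have Xt: "\<forall>x\<in>hyperplane. F x = u * Xt_eq (1/6) x"
    using uv by (simp add: Xt_eq_def power_sum_def algebra_simps)
  moreover have "u \<noteq> 0" using Xt nonzero by auto
  ultimately show ?thesis by blast
qed

end

section \<open>A transitive \<open>\<frakS>\<^sub>5\<close> in \<open>\<frakS>\<^sub>6\<close> is conjugate to the Moebius group\<close>

definition conjugate :: "('a \<Rightarrow> 'a) \<Rightarrow> ('a \<Rightarrow> 'a) \<Rightarrow> 'a \<Rightarrow> 'a" where
  "conjugate \<sigma> g = \<sigma> \<circ> g \<circ> Hilbert_Choice.inv \<sigma>"

lemma conjugate_comp: "\<sigma> permutes S \<Longrightarrow> conjugate \<sigma> (g \<circ> h) = conjugate \<sigma> g \<circ> conjugate \<sigma> h"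
  by (simp add: conjugate_def fun_eq_iff permutes_inverses)

lemma conjugate_id: "\<sigma> permutes S \<Longrightarrow> conjugate \<sigma> id = id"
  by (simp add: conjugate_def fun_eq_iff permutes_inverses)

lemma conjugate_eqI:
  assumes "\<sigma> permutes S" "\<sigma> \<circ> g = h \<circ> \<sigma>"
  shows "conjugate \<sigma> g = h"
proof -
  have "\<sigma> (g y) = h (\<sigma> y)" for y using assms(2) by (metis comp_apply)
  then show ?thesis by (simp add: conjugate_def fun_eq_iff permutes_inverses[OF assms(1)])
qed

lemma conjugate_conjugate:
  assumes "\<sigma> permutes S" "\<tau> permutes S"
  shows "conjugate \<tau> (conjugate \<sigma> g) = conjugate (\<tau> \<circ> \<sigma>) g"
  using o_inv_distrib[OF permutes_bij[OF assms(2)] permutes_bij[OF assms(1)]]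
  by (simp add: conjugate_def o_assoc)

lemma conjugate_permutes: "\<sigma> permutes S \<Longrightarrow> g permutes S \<Longrightarrow> conjugate \<sigma> g permutes S"
  unfolding conjugate_def by (intro permutes_compose permutes_inv) auto

lemma conjugate_inv:
  assumes "\<sigma> permutes S" "g permutes S"
  shows "Hilbert_Choice.inv (conjugate \<sigma> g) = conjugate \<sigma> (Hilbert_Choice.inv g)"
proof (rule inv_unique_comp)
  show "conjugate \<sigma> g \<circ> conjugate \<sigma> (Hilbert_Choice.inv g) = id"
    using conjugate_comp[OF assms(1), symmetric] permutes_inv_o(1)[OF assms(2)] conjugate_id[OF assms(1)] by simp
  show "conjugate \<sigma> (Hilbert_Choice.inv g) \<circ> conjugate \<sigma> g = id"
    using conjugate_comp[OF assms(1), symmetric] permutes_inv_o(2)[OF assms(2)] conjugate_id[OF assms(1)] by simp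
qed

lemma inj_conjugate:
  assumes "\<sigma> permutes S"
  shows "inj (conjugate \<sigma>)"
proof (rule injI)
  fix g h assume "conjugate \<sigma> g = conjugate \<sigma> h"
  then have "Hilbert_Choice.inv \<sigma> \<circ> conjugate \<sigma> g \<circ> \<sigma> = Hilbert_Choice.inv \<sigma> \<circ> conjugate \<sigma> h \<circ> \<sigma>" by simp
  then show "g = h" by (simp add: conjugate_def fun_eq_iff permutes_inverses[OF assms])
qed

lemma perm_group_conjugate:
  assumes G: "perm_group S G" and \<sigma>: "\<sigma> permutes S"
  shows "perm_group S (conjugate \<sigma> ` G)"
  unfolding perm_group_def
proof (intro conjI ballI)
  fix g' assume "g' \<in> conjugate \<sigma> ` G"
  then obtain g where g: "g \<in> G" "g' = conjugate \<sigma> g" by blast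
  have gp: "g permutes S" using G g(1) unfolding perm_group_def by blast
  show "g' permutes S" using conjugate_permutes[OF \<sigma> gp] g(2) by simp
  show "Hilbert_Choice.inv g' \<in> conjugate \<sigma> ` G"
    using conjugate_inv[OF \<sigma> gp] g G unfolding perm_group_def by auto
  fix h' assume "h' \<in> conjugate \<sigma> ` G"
  then obtain h where h: "h \<in> G" "h' = conjugate \<sigma> h" by blast
  have "g \<circ> h \<in> G" using g h G unfolding perm_group_def by blast
  then show "g' \<circ> h' \<in> conjugate \<sigma> ` G" using conjugate_comp[OF \<sigma>, of g h] g h by (metis image_eqI)
next
  show "id \<in> conjugate \<sigma> ` G" using G conjugate_id[OF \<sigma>] unfolding perm_group_def by (metis image_eqI)
qed

text \<open>
  Together with \<open>shift\<close> and \<open>double\<close> it generates the standard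
  \<open>\<frakS>\<^sub>5\<close> fixing 5, and it satisfies the same relations as \<open>inversion\<close>; these relations are
  pulled back along the isomorphism with \<open>\<frakS>\<^sub>5\<close>, and up to conjugacy they leave only these two
  choices for the involution.
\<close>

definition pair_swap :: "nat \<Rightarrow> nat" where
  "pair_swap n = (if n = 1 then 2 else if n = 2 then 1 else if n = 3 then 4 else if n = 4 then 3 else n)"

lemma pair_swap_permutes: "pair_swap permutes {..<5}"
proof (rule permutes_of_funpow_id[where k = 1])
  show "pair_swap ^^ Suc 1 = id" by (rule ext) (simp add: pair_swap_def)
qed (simp add: pair_swap_def)

definition mobius_relations :: "(nat \<Rightarrow> nat) \<Rightarrow> (nat \<Rightarrow> nat) \<Rightarrow> (nat \<Rightarrow> nat) \<Rightarrow> bool" where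
  "mobius_relations a b r \<longleftrightarrow> a \<circ> a \<circ> a \<circ> a \<circ> a = id \<and> b \<circ> a = a \<circ> a \<circ> b \<and> r \<circ> r = id
     \<and> r \<circ> b \<circ> r = b \<circ> b \<circ> b \<and> r \<circ> a \<circ> (r \<circ> a) \<circ> (r \<circ> a) = id"

lemma mobius_relations_pair_swap: "mobius_relations shift double pair_swap"
  unfolding mobius_relations_def
  by (intro conjI; rule fun_eq_below_six) (simp_all add: all_less_six shift_def double_def pair_swap_def)

lemma mobius_relations_conjugate:
  "\<sigma> permutes S \<Longrightarrow> mobius_relations a b r
    \<Longrightarrow> mobius_relations (conjugate \<sigma> a) (conjugate \<sigma> b) (conjugate \<sigma> r)"
  by (simp add: mobius_relations_def conjugate_comp[symmetric] conjugate_id)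

lemma mobius_relations_reflect:
  assumes hom: "\<And>x y. x \<in> G \<Longrightarrow> y \<in> G \<Longrightarrow> \<psi> (x \<circ> y) = \<psi> x \<circ> \<psi> y" and "inj_on \<psi> G"
    and closed: "\<And>x y. x \<in> G \<Longrightarrow> y \<in> G \<Longrightarrow> x \<circ> y \<in> G" and "id \<in> G" "\<psi> id = id"
    and "a \<in> G" "b \<in> G" "r \<in> G" and "mobius_relations (\<psi> a) (\<psi> b) (\<psi> r)"
  shows "mobius_relations a b r"
proof -
  have eq: "x = y" if "x \<in> G" "y \<in> G" "\<psi> x = \<psi> y" for x y
    using \<open>inj_on \<psi> G\<close> that by (meson inj_onD)
  have G: "a \<in> G" "b \<in> G" "r \<in> G" by fact+
  have rel: "\<psi> a \<circ> \<psi> a \<circ> \<psi> a \<circ> \<psi> a \<circ> \<psi> a = id" "\<psi> b \<circ> \<psi> a = \<psi> a \<circ> \<psi> a \<circ> \<psi> b"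
    "\<psi> r \<circ> \<psi> r = id" "\<psi> r \<circ> \<psi> b \<circ> \<psi> r = \<psi> b \<circ> \<psi> b \<circ> \<psi> b"
    "\<psi> r \<circ> \<psi> a \<circ> (\<psi> r \<circ> \<psi> a) \<circ> (\<psi> r \<circ> \<psi> a) = id"
    using assms(9) unfolding mobius_relations_def by blast+
  have "a \<circ> a \<circ> a \<circ> a \<circ> a = id" by (rule eq) (use G rel(1) assms(4,5) in \<open>simp_all add: closed hom\<close>)
  moreover have "b \<circ> a = a \<circ> a \<circ> b" by (rule eq) (use G rel(2) in \<open>simp_all add: closed hom\<close>)
  moreover have "r \<circ> r = id" by (rule eq) (use G rel(3) assms(4,5) in \<open>simp_all add: closed hom\<close>)
  moreover have "r \<circ> b \<circ> r = b \<circ> b \<circ> b" by (rule eq) (use G rel(4) in \<open>simp_all add: closed hom\<close>)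
  moreover have "r \<circ> a \<circ> (r \<circ> a) \<circ> (r \<circ> a) = id"
    by (rule eq) (use G rel(5) assms(4,5) in \<open>simp_all add: closed hom\<close>)
  ultimately show ?thesis unfolding mobius_relations_def by blast
qed

lemma funpow_order_five_fixed:
  assumes "a ^^ 5 = id" "(a ^^ d) y = y" "0 < d" "d < 5"
  shows "a y = y"
proof -
  have iterate: "(a ^^ (d * e)) y = y" for e
    by (induction e) (simp_all add: funpow_add assms(2))
  have "d \<in> {1, 2, 3, 4}" using assms(3,4) by auto
  then have "(d * d ^ 3) mod 5 = 1" by auto
  then have "a y = (a ^^ (d * d ^ 3)) y"
    using funpow_mod_eq[where f = a and n = 5 and x = y and m = "d * d ^ 3"] assms(1) by simp
  then show ?thesis using iterate by simp
qed

lemma funpow_order_five_inj: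
  assumes "a ^^ 5 = id" "a i \<noteq> i"
  shows "inj_on (\<lambda>k. (a ^^ k) i) {..<5}"
proof -
  have undo: "(a ^^ (5 - k)) ((a ^^ k) z) = z" if "k \<le> 5" for k z
  proof -
    have "(a ^^ (5 - k)) ((a ^^ k) z) = (a ^^ (5 - k + k)) z" by (simp only: funpow_add comp_apply)
    also have "5 - k + k = 5" using that by simp
    finally show ?thesis using assms(1) by simp
  qed
  have False if "k < l" "l < 5" "(a ^^ k) i = (a ^^ l) i" for k l
  proof -
    have "(a ^^ (l - k)) ((a ^^ k) i) = (a ^^ (l - k + k)) i" by (simp only: funpow_add comp_apply)
    also have "l - k + k = l" using that(1) by simp
    finally have fixed: "(a ^^ (l - k)) ((a ^^ k) i) = (a ^^ k) i" using that(3) by simp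
    have "a ((a ^^ k) i) = (a ^^ k) i" using funpow_order_five_fixed[OF assms(1) fixed] that(1,2) by simp
    then have "(a ^^ (5 - k)) ((a ^^ k) (a i)) = (a ^^ (5 - k)) ((a ^^ k) i)" by (simp add: funpow_swap1)
    then show False using undo[of k] that(1,2) assms(2) by simp
  qed
  then show ?thesis by (intro inj_onI) (metis lessThan_iff linorder_neqE_nat)
qed

lemma funpow_five_last:
  assumes "a ^^ 5 = id"
  shows "a ((a ^^ 4) i) = i"
proof -
  have "a ((a ^^ 4) i) = (a ^^ 5) i" by (simp add: numeral_eq_Suc)
  then show ?thesis using assms by simp
qed

lemma order_five_orbit:
  fixes a :: "nat \<Rightarrow> nat"
  assumes a: "a permutes {..<6}" and order: "a ^^ 5 = id" and i: "a i \<noteq> i"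
  obtains p where "a p = p" "{..<6} = insert p ((\<lambda>k. (a ^^ k) i) ` {..<5})"
proof -
  have "i < 6" using permutes_not_in[OF a] i by (metis lessThan_iff)
  define orbit where "orbit = (\<lambda>k. (a ^^ k) i) ` {..<5}"
  have "card orbit = 5" using card_image[OF funpow_order_five_inj[OF order i]] by (simp add: orbit_def)
  moreover have orbit_sub: "orbit \<subseteq> {..<6}"
    using permutes_in_funpow_image[OF a] \<open>i < 6\<close> by (auto simp: orbit_def)
  ultimately have "card ({..<6} - orbit) = 1" by (simp add: card_Diff_subset finite_subset)
  then obtain p where p: "{..<6} - orbit = {p}" by (rule card_1_singletonE)
  have "a ` orbit \<subseteq> orbit"
  proof
    fix y assume "y \<in> a ` orbit"
    then obtain k where k: "k < 5" "y = a ((a ^^ k) i)" by (auto simp: orbit_def)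
    show "y \<in> orbit"
    proof (cases "k = 4")
      case True
      then have "y = (a ^^ 0) i" using k(2) funpow_five_last[OF order] by simp
      then show ?thesis unfolding orbit_def by (rule image_eqI) simp
    next
      case False
      then have "y = (a ^^ Suc k) i" "Suc k < 5" using k by simp_all
      then show ?thesis unfolding orbit_def by (intro image_eqI[of y _ "Suc k"]) simp_all
    qed
  qed
  moreover have "finite orbit" by (simp add: orbit_def)
  moreover have "inj_on a orbit" using permutes_inj[OF a] by (rule inj_on_subset) simp
  ultimately have a_orbit: "a ` orbit = orbit" by (simp add: endo_inj_surj)
  have "a p \<notin> orbit"
  proof
    assume "a p \<in> orbit"
    then obtain z where "z \<in> orbit" "a p = a z" using a_orbit by blast
    then have "p \<in> orbit" using permutes_inj[OF a] by (metis injD)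
    then show False using p by blast
  qed
  moreover have "a p < 6" using p permutes_in_image[OF a] by auto
  ultimately have "a p = p" using p by blast
  moreover have "{..<6} = insert p orbit" using p orbit_sub by auto
  ultimately show ?thesis using that by (simp add: orbit_def)
qed

lemma conjugate_to_shift:
  assumes a: "a permutes {..<6}" and order: "a ^^ 5 = id" and "a \<noteq> id"
  obtains \<sigma> where "\<sigma> permutes {..<6}" "conjugate \<sigma> a = shift"
proof -
  obtain i where i: "a i \<noteq> i" using \<open>a \<noteq> id\<close> by (auto simp: fun_eq_iff)
  obtain p where ap: "a p = p" and points: "{..<6} = insert p ((\<lambda>k. (a ^^ k) i) ` {..<5})"
    using order_five_orbit[OF a order i] .
  define \<tau> where "\<tau> n = (if n < 5 then (a ^^ n) i else if n = 5 then p else n)" for n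
  have "\<tau> ` {..<5} = (\<lambda>k. (a ^^ k) i) ` {..<5}" by (rule image_cong) (simp_all add: \<tau>_def)
  moreover have "{..<6::nat} = insert 5 {..<5}" "\<tau> 5 = p" by (auto simp: \<tau>_def)
  ultimately have image: "\<tau> ` {..<6} = {..<6}" using points by simp
  then have "inj_on \<tau> {..<6}" by (intro eq_card_imp_inj_on) simp_all
  then have \<tau>: "\<tau> permutes {..<6}"
    using image by (intro bij_imp_permutes) (auto simp: bij_betw_def \<tau>_def)
  have intertwine: "a (\<tau> n) = \<tau> (shift n)" for n
  proof -
    consider "n < 4" | "n = 4" | "n = 5" | "6 \<le> n" by linarith
    then show ?thesis
      by cases (use funpow_five_last[OF order] ap permutes_not_in[OF a, of n] in \<open>simp_all add: \<tau>_def shift_def\<close>)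
  qed
  have "Hilbert_Choice.inv \<tau> (a y) = shift (Hilbert_Choice.inv \<tau> y)" for y
  proof -
    have "a y = \<tau> (shift (Hilbert_Choice.inv \<tau> y))"
      using intertwine[of "Hilbert_Choice.inv \<tau> y"] permutes_inverses(1)[OF \<tau>] by simp
    then show ?thesis by (simp add: permutes_inverses(2)[OF \<tau>])
  qed
  then have "conjugate (Hilbert_Choice.inv \<tau>) a = shift"
    by (intro conjugate_eqI[OF permutes_inv[OF \<tau>]]) (simp add: fun_eq_iff)
  then show ?thesis using that permutes_inv[OF \<tau>] by blast
qed

lemma shift_shift: "y < 5 \<Longrightarrow> shift (shift y) = (y + 2) mod 5"
  using mod_add_left_eq[of "y + 1" 5 1] by (simp add: shift_def)

lemma conjugate_to_double:
  assumes b: "b permutes {..<6}" and rel: "b \<circ> shift = shift \<circ> shift \<circ> b"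
  shows "conjugate (shift ^^ b 0) b = double"
proof -
  have step: "b (shift n) = shift (shift (b n))" for n using fun_cong[OF rel, of n] by simp
  have "b 5 < 6" using permutes_in_image[OF b] by simp
  moreover have "b 5 = shift (shift (b 5))" using step[of 5] by (simp add: shift_def)
  ultimately have b5: "b 5 = 5" unfolding less_six by (auto simp: shift_def)
  have below: "b n < 5" if "n < 5" for n
  proof -
    have "b n < 6" using permutes_in_image[OF b, of n] that by simp
    moreover have "b n \<noteq> b 5" using permutes_inj[OF b] that by (simp add: inj_eq)
    ultimately show ?thesis using b5 by simp
  qed
  have affine: "b n = (b 0 + 2 * n) mod 5" if "n < 5" for n
    using that
  proof (induction n)
    case (Suc n)
    then have "b (Suc n) = shift (shift (b n))" using step[of n] by (simp add: shift_def)
    also have "\<dots> = ((b 0 + 2 * n) mod 5 + 2) mod 5" using Suc below[of n] by (simp add: shift_shift)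
    also have "\<dots> = (b 0 + 2 * Suc n) mod 5" using mod_add_left_eq[of "b 0 + 2 * n" 5 2] by simp
    finally show ?case .
  qed (use below[of 0] in simp)
  have "(shift ^^ b 0) (b n) = double ((shift ^^ b 0) n)" for n
  proof (cases "n < 5")
    case True
    have "(shift ^^ b 0) (b n) = ((b 0 + 2 * n) mod 5 + b 0) mod 5"
      using True below[OF True] affine[OF True] by (simp add: shift_funpow)
    also have "\<dots> = (b 0 + 2 * n + b 0) mod 5" by (rule mod_add_left_eq)
    also have "\<dots> = (2 * (n + b 0)) mod 5" by (simp add: algebra_simps)
    also have "\<dots> = double ((shift ^^ b 0) n)"
      using True by (simp add: shift_funpow double_def mod_mult_right_eq add.commute)
    finally show ?thesis .
  next
    case False
    then show ?thesis using b5 permutes_not_in[OF b, of n] by (cases "n = 5") (simp_all add: shift_funpow double_def)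
  qed
  then show ?thesis
    using funpow_permutes[OF permutes_subset[OF shift_permutes, of "{..<6}"]]
    by (intro conjugate_eqI) (auto simp: fun_eq_iff)
qed

lemma mobius_involution_cases:
  assumes r: "r permutes {..<6}" and rel: "mobius_relations shift double r"
  shows "r = inversion \<or> r = pair_swap"
proof -
  have involution: "r (r n) = n" for n
    using rel unfolding mobius_relations_def by (metis comp_apply id_apply)
  have step: "r (double n) = double (double (double (r n)))" for n
  proof -
    have "(r \<circ> double \<circ> r) (r n) = (double \<circ> double \<circ> double) (r n)"
      using rel unfolding mobius_relations_def by simp
    then show ?thesis by (simp add: involution)
  qed
  have cubic: "r (shift (r (shift (r (shift n))))) = n" for n
  proof -
    have "(r \<circ> shift \<circ> (r \<circ> shift) \<circ> (r \<circ> shift)) n = id n"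
      using rel unfolding mobius_relations_def by simp
    then show ?thesis by simp
  qed
  have r_less: "r n < 6" if "n < 6" for n using permutes_in_image[OF r] that by simp
  have "r 0 \<in> {0, 5}" "r 5 \<in> {0, 5}"
    using r_less[of 0] r_less[of 5] step[of 0] step[of 5] unfolding less_six by (auto simp: double_def)
  moreover have "r 0 \<noteq> r 5" "r 1 \<noteq> r 0" "r 1 \<noteq> r 5" using permutes_inj[OF r] by (simp_all add: inj_eq)
  ultimately have "r 0 = 0 \<and> r 5 = 5 \<or> r 0 = 5 \<and> r 5 = 0" "r 1 \<in> {1, 2, 3, 4}"
    using r_less[of 1] unfolding less_six by auto
  moreover have r2: "r 2 = double (double (double (r 1)))" using step[of 1] by (simp add: double_def)
  moreover have r4: "r 4 = double (double (double (r 2)))" using step[of 2] by (simp add: double_def)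
  moreover have r3: "r 3 = double (double (double (r 4)))" using step[of 4] by (simp add: double_def)
  moreover have "r (shift (r (shift (r 1)))) = 0" using cubic[of 0] by (simp add: shift_def del: One_nat_def)
  ultimately have "r 0 = 0 \<and> r 5 = 5 \<and> r 1 = 2 \<or> r 0 = 5 \<and> r 5 = 0 \<and> r 1 = 4"
    by (elim insertE emptyE disjE conjE) (simp_all add: shift_def double_def del: One_nat_def)
  then show ?thesis
  proof (elim disjE conjE)
    assume "r 0 = 0" "r 5 = 5" "r 1 = 2"
    then have "r = pair_swap"
      using r2 r3 r4 permutes_not_in[OF r]
      by (intro fun_eq_below_six) (simp_all add: all_less_six double_def pair_swap_def)
    then show ?thesis ..
  next
    assume "r 0 = 5" "r 5 = 0" "r 1 = 4"
    then have "r = inversion"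
      using r2 r3 r4 permutes_not_in[OF r]
      by (intro fun_eq_below_six) (simp_all add: all_less_six double_def inversion_def)
    then show ?thesis ..
  qed
qed

lemma mobius_normal_form:
  assumes a: "a permutes {..<6}" and b: "b permutes {..<6}" and r: "r permutes {..<6}"
    and rel: "mobius_relations a b r" and "a \<noteq> id"
  obtains \<sigma> where "\<sigma> permutes {..<6}" "conjugate \<sigma> a = shift" "conjugate \<sigma> b = double"
    "conjugate \<sigma> r = inversion \<or> conjugate \<sigma> r = pair_swap"
proof -
  have "a ^^ 5 = id" using rel by (simp add: mobius_relations_def numeral_eq_Suc comp_assoc del: One_nat_def)
  then obtain \<sigma>\<^sub>1 where \<sigma>\<^sub>1: "\<sigma>\<^sub>1 permutes {..<6}" "conjugate \<sigma>\<^sub>1 a = shift"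
    using conjugate_to_shift[OF a] \<open>a \<noteq> id\<close> by blast
  define b\<^sub>1 where "b\<^sub>1 = conjugate \<sigma>\<^sub>1 b"
  have rel\<^sub>1: "mobius_relations shift b\<^sub>1 (conjugate \<sigma>\<^sub>1 r)"
    using mobius_relations_conjugate[OF \<sigma>\<^sub>1(1) rel] \<sigma>\<^sub>1(2) by (simp add: b\<^sub>1_def)
  have b\<^sub>1: "b\<^sub>1 permutes {..<6}" using conjugate_permutes[OF \<sigma>\<^sub>1(1) b] by (simp add: b\<^sub>1_def)
  define \<sigma> where "\<sigma> = shift ^^ b\<^sub>1 0 \<circ> \<sigma>\<^sub>1"
  have shift_power: "shift ^^ b\<^sub>1 0 permutes {..<6}"
    using funpow_permutes[OF permutes_subset[OF shift_permutes]] by auto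
  then have \<sigma>: "\<sigma> permutes {..<6}" unfolding \<sigma>_def using \<sigma>\<^sub>1(1) by (rule permutes_compose[rotated])
  have conj: "conjugate \<sigma> g = conjugate (shift ^^ b\<^sub>1 0) (conjugate \<sigma>\<^sub>1 g)" for g
    unfolding \<sigma>_def using conjugate_conjugate[OF \<sigma>\<^sub>1(1) shift_power] by simp
  have "conjugate \<sigma> a = shift"
    unfolding conj \<sigma>\<^sub>1(2) using shift_power by (intro conjugate_eqI) (simp_all add: funpow_swap1 fun_eq_iff)
  moreover have "conjugate \<sigma> b = double"
    unfolding conj b\<^sub>1_def[symmetric] using rel\<^sub>1 by (intro conjugate_to_double b\<^sub>1) (simp add: mobius_relations_def)
  moreover have "mobius_relations shift double (conjugate \<sigma> r)"
    using mobius_relations_conjugate[OF \<sigma> rel] calculation by simp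
  then have "conjugate \<sigma> r = inversion \<or> conjugate \<sigma> r = pair_swap"
    using mobius_involution_cases conjugate_permutes[OF \<sigma> r] by blast
  ultimately show ?thesis using that \<sigma> by blast
qed

lemma transpositions_as_words:
  "Transposition.transpose 0 1 = pair_swap \<circ> shift \<circ> double \<circ> shift \<circ> pair_swap \<circ> shift"
  "Transposition.transpose 0 2 = shift \<circ> double \<circ> shift \<circ> pair_swap \<circ> shift \<circ> pair_swap"
  "Transposition.transpose 0 3 = double \<circ> shift \<circ> shift \<circ> pair_swap \<circ> shift"
  "Transposition.transpose 0 4 = shift \<circ> shift \<circ> pair_swap \<circ> shift \<circ> double"
  "Transposition.transpose 1 2 = shift \<circ> pair_swap \<circ> shift \<circ> double \<circ> shift \<circ> pair_swap"
  "Transposition.transpose 1 3 = double \<circ> shift \<circ> double \<circ> pair_swap \<circ> shift \<circ> double"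
  "Transposition.transpose 1 4 = double \<circ> pair_swap"
  "Transposition.transpose 2 3 = pair_swap \<circ> double"
  "Transposition.transpose 2 4 = shift \<circ> double \<circ> shift \<circ> pair_swap \<circ> shift \<circ> shift"
  "Transposition.transpose 3 4 = shift \<circ> pair_swap \<circ> shift \<circ> double \<circ> shift"
  by (rule fun_eq_below_six;
      simp add: all_less_six transpose_def shift_def double_def pair_swap_def del: One_nat_def)+

lemma standard_S5_fixes_infinity:
  assumes H: "perm_group {..<6} H" "card H = 120" and gens: "shift \<in> H" "double \<in> H" "pair_swap \<in> H"
    and "h \<in> H"
  shows "h 5 = 5"
proof -
  have comp: "g \<circ> g' \<in> H" if "g \<in> H" "g' \<in> H" for g g'
    using H(1) that unfolding perm_group_def by blast
  have transpositions: "Transposition.transpose x y \<in> H" if "x < 5" "y < 5" "x \<noteq> y" for x y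
  proof -
    have ordered: "Transposition.transpose x y \<in> H" if "x < y" "y < 5" for x y
    proof -
      have "x \<in> {0, 1, 2, 3, 4}" "y \<in> {0, 1, 2, 3, 4}" using that by auto
      then show ?thesis using \<open>x < y\<close>
        by (elim insertE emptyE) (simp_all add: transpositions_as_words comp gens del: One_nat_def)
    qed
    show ?thesis
    proof (cases "x < y")
      case False
      then show ?thesis using that ordered[of y x] by (simp add: transpose_commute)
    qed (use that ordered in simp)
  qed
  have "p \<in> H" if "p permutes {..<5}" for p
    using that finite_lessThan
  proof (induction rule: permutes_induct)
    case id
    then show ?case using H(1) unfolding perm_group_def by blast
  next
    case (swap a b p)
    then have "Transposition.transpose a b \<in> H" by (intro transpositions) simp_all
    then show ?case using swap comp by blast
  qed
  then have "{p. p permutes {..<5}} \<subseteq> H" by blast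
  moreover have "finite H" using H(2) card.infinite by fastforce
  moreover have "card {p. p permutes {..<5::nat}} = card H"
    using card_permutations[of "{..<5::nat}" 5] H(2) by (simp add: fact_numeral)
  ultimately have "{p. p permutes {..<5}} = H" by (intro card_subset_eq)
  then have "h permutes {..<5}" using \<open>h \<in> H\<close> by blast
  then show ?thesis by (simp add: permutes_not_in)
qed

lemma Sym_inv:
  assumes g: "g permutes {..<n}"
  shows "m_inv (Sym n) g = Hilbert_Choice.inv g"
proof -
  have "m_inv (Sym n) g = (THE h. h \<in> {p. p permutes {..<n}} \<and> g \<circ> h = id \<and> h \<circ> g = id)"
    by (simp add: m_inv_def Sym_def)
  also have "\<dots> = Hilbert_Choice.inv g"
  proof (rule the_equality)
    show "Hilbert_Choice.inv g \<in> {p. p permutes {..<n}} \<and> g \<circ> Hilbert_Choice.inv g = id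
        \<and> Hilbert_Choice.inv g \<circ> g = id"
      using permutes_inv[OF g] permutes_inv_o[OF g] by simp
    fix h assume "h \<in> {p. p permutes {..<n}} \<and> g \<circ> h = id \<and> h \<circ> g = id"
    then have "h \<circ> g \<circ> Hilbert_Choice.inv g = Hilbert_Choice.inv g" by simp
    then show "h = Hilbert_Choice.inv g" using permutes_inv_o(1)[OF g] by (simp add: comp_assoc)
  qed
  finally show ?thesis .
qed

lemma perm_group_of_subgroup:
  assumes "subgroup G (Sym n)"
  shows "perm_group {..<n} G"
proof -
  have perm: "g permutes {..<n}" if "g \<in> G" for g
    using subgroup.subset[OF assms] that by (auto simp: Sym_def)
  moreover have "id \<in> G" using subgroup.one_closed[OF assms] by (simp add: Sym_def)
  moreover have "g \<circ> h \<in> G" if "g \<in> G" "h \<in> G" for g h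
    using subgroup.m_closed[OF assms that] by (simp add: Sym_def)
  moreover have "Hilbert_Choice.inv g \<in> G" if "g \<in> G" for g
    using subgroup.m_inv_closed[OF assms that] Sym_inv[OF perm[OF that]] by simp
  ultimately show ?thesis unfolding perm_group_def by blast
qed

lemma iso_Sym5:
  assumes "\<psi> \<in> iso ((Sym 6)\<lparr>carrier := G\<rparr>) (Sym 5)"
  shows "card G = 120"
    and "\<And>x y. x \<in> G \<Longrightarrow> y \<in> G \<Longrightarrow> \<psi> (x \<circ> y) = \<psi> x \<circ> \<psi> y"
    and "bij_betw \<psi> G {p. p permutes {..<5}}"
proof -
  show bij: "bij_betw \<psi> G {p. p permutes {..<5}}" using assms unfolding iso_def by (simp add: Sym_def)
  show "\<psi> (x \<circ> y) = \<psi> x \<circ> \<psi> y" if "x \<in> G" "y \<in> G" for x y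
    using assms that unfolding iso_def hom_def by (auto simp: Sym_def)
  have "card G = card {p. p permutes {..<5::nat}}" using bij_betw_same_card[OF bij] .
  also have "\<dots> = 120" using card_permutations[of "{..<5::nat}" 5] by (simp add: fact_numeral)
  finally show "card G = 120" .
qed

lemma mobius_preimages:
  assumes group: "perm_group {..<6} G" and iso: "\<psi> \<in> iso ((Sym 6)\<lparr>carrier := G\<rparr>) (Sym 5)"
  obtains a b r where "a \<in> G" "b \<in> G" "r \<in> G" "mobius_relations a b r" "a \<noteq> id"
proof -
  note hom = iso_Sym5(2)[OF iso] and bij = iso_Sym5(3)[OF iso]
  have id: "id \<in> G" and closed: "\<And>x y. x \<in> G \<Longrightarrow> y \<in> G \<Longrightarrow> x \<circ> y \<in> G"
    using group unfolding perm_group_def by blast+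
  have p: "\<psi> id permutes {..<5}" using bij_betw_apply[OF bij id] by simp
  have "Hilbert_Choice.inv (\<psi> id) \<circ> \<psi> id = Hilbert_Choice.inv (\<psi> id) \<circ> (\<psi> id \<circ> \<psi> id)"
    using hom[OF id id] by simp
  then have psi_id: "\<psi> id = id" using permutes_inv_o(2)[OF p] by (simp add: comp_assoc[symmetric])
  have "{shift, double, pair_swap} \<subseteq> \<psi> ` G"
    using bij_betw_imp_surj_on[OF bij] shift_permutes double_permutes pair_swap_permutes by auto
  then obtain a b r where G: "a \<in> G" "b \<in> G" "r \<in> G"
    and images: "\<psi> a = shift" "\<psi> b = double" "\<psi> r = pair_swap"
    by (auto simp del: One_nat_def)
  have "mobius_relations a b r"
    using mobius_relations_reflect[OF hom bij_betw_imp_inj_on[OF bij] closed id psi_id G]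
      mobius_relations_pair_swap images by simp
  moreover have "\<psi> a 0 \<noteq> \<psi> id 0" using images(1) psi_id by (simp add: shift_def)
  then have "a \<noteq> id" by metis
  ultimately show ?thesis using that G by blast
qed

lemma conjugate_to_mobius_group:
  assumes group: "perm_group {..<6} G" and iso: "\<psi> \<in> iso ((Sym 6)\<lparr>carrier := G\<rparr>) (Sym 5)"
    and transitive: "\<forall>i<6. \<forall>j<6. \<exists>g\<in>G. g i = j"
  obtains \<sigma> where "\<sigma> permutes {..<6}"
    "shift \<in> conjugate \<sigma> ` G" "double \<in> conjugate \<sigma> ` G" "inversion \<in> conjugate \<sigma> ` G"
proof -
  obtain a b r where abr: "a \<in> G" "b \<in> G" "r \<in> G" "mobius_relations a b r" "a \<noteq> id"
    using mobius_preimages[OF group iso] by blast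
  have "a permutes {..<6}" "b permutes {..<6}" "r permutes {..<6}"
    using group abr(1-3) unfolding perm_group_def by blast+
  then obtain \<sigma> where \<sigma>: "\<sigma> permutes {..<6}" "conjugate \<sigma> a = shift" "conjugate \<sigma> b = double"
    "conjugate \<sigma> r = inversion \<or> conjugate \<sigma> r = pair_swap"
    using mobius_normal_form[OF _ _ _ abr(4,5)] by blast
  have G': "perm_group {..<6} (conjugate \<sigma> ` G)" "card (conjugate \<sigma> ` G) = 120"
    using perm_group_conjugate[OF group \<sigma>(1)] iso_Sym5(1)[OF iso]
      card_image[OF inj_on_subset[OF inj_conjugate[OF \<sigma>(1)] subset_UNIV]] by simp_all
  have shift: "shift \<in> conjugate \<sigma> ` G" and double: "double \<in> conjugate \<sigma> ` G"
    using imageI[OF abr(1), of "conjugate \<sigma>"] imageI[OF abr(2), of "conjugate \<sigma>"] \<sigma>(2,3) by simp_all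
  have "conjugate \<sigma> r \<noteq> pair_swap"
  proof
    assume "conjugate \<sigma> r = pair_swap"
    then have "pair_swap \<in> conjugate \<sigma> ` G" using imageI[OF abr(3), of "conjugate \<sigma>"] by simp
    then have fixes_5: "h 5 = 5" if "h \<in> conjugate \<sigma> ` G" for h
      using standard_S5_fixes_infinity[OF G' shift double _ that] by blast
    have "Hilbert_Choice.inv \<sigma> 5 < 6" "Hilbert_Choice.inv \<sigma> 0 < 6"
      using permutes_in_image[OF permutes_inv[OF \<sigma>(1)]] by simp_all
    then obtain g where "g \<in> G" "g (Hilbert_Choice.inv \<sigma> 5) = Hilbert_Choice.inv \<sigma> 0"
      using transitive by blast
    then have "conjugate \<sigma> g \<in> conjugate \<sigma> ` G" "conjugate \<sigma> g 5 = 0"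
      by (simp_all add: conjugate_def permutes_inverses(1)[OF \<sigma>(1)])
    then show False using fixes_5 by fastforce
  qed
  then have "conjugate \<sigma> r = inversion" using \<sigma>(4) by blast
  then have "inversion \<in> conjugate \<sigma> ` G" using imageI[OF abr(3), of "conjugate \<sigma>"] by simp
  then show ?thesis using that \<sigma>(1) shift double by blast
qed

section \<open>Transport along the conjugation and the theorem\<close>

lemma quartic_exps_comp_permutes: "\<alpha> \<in> quartic_exps \<Longrightarrow> \<tau> permutes {..<6} \<Longrightarrow> \<alpha> \<circ> \<tau> \<in> quartic_exps"
  unfolding quartic_exps_def
  using sum.permute[of \<tau> "{..<6}" \<alpha>] permutes_not_in[of \<tau> "{..<6}"] by auto

lemma quartic_form_comp_permutes:
  assumes F: "quartic_form F" and \<sigma>: "\<sigma> permutes {..<6}"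
  shows "quartic_form (\<lambda>x. F (x \<circ> \<sigma>))"
proof -
  obtain a where "\<forall>x. F x = (\<Sum>\<alpha>\<in>quartic_exps. a \<alpha> * (\<Prod>i<6. x i ^ \<alpha> i))"
    using F unfolding quartic_form_def by blast
  then have a: "F x = (\<Sum>\<alpha>\<in>quartic_exps. a \<alpha> * monomial \<alpha> x)" for x by (simp add: monomial_def)
  let ?\<sigma>' = "Hilbert_Choice.inv \<sigma>"
  have "F (x \<circ> \<sigma>) = (\<Sum>\<beta>\<in>quartic_exps. a (\<beta> \<circ> \<sigma>) * monomial \<beta> x)" for x
  proof -
    have "F (x \<circ> \<sigma>) = (\<Sum>\<alpha>\<in>quartic_exps. a \<alpha> * monomial (\<alpha> \<circ> ?\<sigma>') x)"
      unfolding a monomial_comp_permutes[OF permutes_inv[OF \<sigma>]] permutes_inv_inv[OF \<sigma>] ..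
    also have "\<dots> = (\<Sum>\<beta>\<in>quartic_exps. a (\<beta> \<circ> \<sigma>) * monomial \<beta> x)"
      by (rule sum.reindex_bij_witness[where i = "\<lambda>\<beta>. \<beta> \<circ> \<sigma>" and j = "\<lambda>\<alpha>. \<alpha> \<circ> ?\<sigma>'"])
         (simp_all add: comp_assoc permutes_inv_o[OF \<sigma>] quartic_exps_comp_permutes \<sigma> permutes_inv[OF \<sigma>])
    finally show ?thesis .
  qed
  then show ?thesis unfolding quartic_form_def monomial_def
    by (intro exI[of _ "\<lambda>\<beta>. a (\<beta> \<circ> \<sigma>)"]) simp
qed

lemma semi_invariant_quartic_conjugate:
  assumes G: "perm_group {..<6} G" "card G = 120" and \<sigma>: "\<sigma> permutes {..<6}"
    and mobius: "shift \<in> conjugate \<sigma> ` G" "double \<in> conjugate \<sigma> ` G" "inversion \<in> conjugate \<sigma> ` G"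
    and F: "quartic_threefold_eq F" "\<forall>g\<in>G. invariant_under F g"
  shows "semi_invariant_quartic (conjugate \<sigma> ` G) (\<lambda>x. F (x \<circ> \<sigma>))"
proof
  show "perm_group {..<6} (conjugate \<sigma> ` G)" using G(1) \<sigma> by (rule perm_group_conjugate)
  show "card (conjugate \<sigma> ` G) = 120"
    using G(2) card_image[OF inj_on_subset[OF inj_conjugate[OF \<sigma>]]] by simp
  show "quartic_form (\<lambda>x. F (x \<circ> \<sigma>))"
    using F(1) \<sigma> unfolding quartic_threefold_eq_def by (blast intro: quartic_form_comp_permutes)
  show "\<forall>g'\<in>conjugate \<sigma> ` G. invariant_under (\<lambda>x. F (x \<circ> \<sigma>)) g'"
  proof
    fix g' assume "g' \<in> conjugate \<sigma> ` G"
    then obtain g where g: "g \<in> G" "g' = conjugate \<sigma> g" by blast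
    obtain c where c: "\<forall>x\<in>hyperplane. F (x \<circ> g) = c * F x"
      using F(2) g(1) unfolding invariant_under_def by blast
    have "x \<circ> g' \<circ> \<sigma> = x \<circ> \<sigma> \<circ> g" for x :: "nat \<Rightarrow> complex"
      using g(2) permutes_inv_o(2)[OF \<sigma>] by (simp add: conjugate_def comp_assoc)
    then have "F (x \<circ> g' \<circ> \<sigma>) = c * F (x \<circ> \<sigma>)" if "x \<in> hyperplane" for x
      using c hyperplane_comp_permutes[OF that \<sigma>] by simp
    then show "invariant_under (\<lambda>x. F (x \<circ> \<sigma>)) g'"
      unfolding invariant_under_def by blast
  qed
  obtain x where x: "x \<in> hyperplane" "F x \<noteq> 0" using F(1) unfolding quartic_threefold_eq_def by blast
  then show "\<exists>x\<in>hyperplane. F (x \<circ> \<sigma>) \<noteq> 0"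
    using hyperplane_comp_permutes[OF x(1) permutes_inv[OF \<sigma>]] permutes_inv_o(2)[OF \<sigma>]
    by (metis comp_assoc comp_id)
qed (use mobius in auto)

lemma Xt_eq_comp_permutes: "\<tau> permutes {..<6} \<Longrightarrow> Xt_eq t (x \<circ> \<tau>) = Xt_eq t x"
  unfolding Xt_eq_def
  using sum.permute[of \<tau> "{..<6}" "\<lambda>i. x i ^ 4"] sum.permute[of \<tau> "{..<6}" "\<lambda>i. x i ^ 2"]
  by (simp add: comp_def)

theorem lemma4p11:
  fixes G :: "(nat \<Rightarrow> nat) set" and F :: "(nat \<Rightarrow> complex) \<Rightarrow> complex"
  assumes "subgroup G (Sym 6)"
    and "(Sym 6)\<lparr>carrier := G\<rparr> \<cong> Sym 5"
    and "\<forall>i<6. \<forall>j<6. \<exists>g\<in>G. g i = j"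
    and "quartic_threefold_eq F"
    and "\<forall>g\<in>G. invariant_under F g"
    and "\<forall>x\<in>Sigma10. F x = 0"
  shows "\<exists>c. c \<noteq> 0 \<and> (\<forall>x\<in>hyperplane. F x = c * Xt_eq (1/6) x)"
proof -
  have group: "perm_group {..<6} G" using assms(1) by (rule perm_group_of_subgroup)
  obtain \<psi> where iso: "\<psi> \<in> iso ((Sym 6)\<lparr>carrier := G\<rparr>) (Sym 5)" using assms(2) unfolding is_iso_def by blast
  obtain \<sigma> where \<sigma>: "\<sigma> permutes {..<6}"
    and mobius: "shift \<in> conjugate \<sigma> ` G" "double \<in> conjugate \<sigma> ` G" "inversion \<in> conjugate \<sigma> ` G"
    using conjugate_to_mobius_group[OF group iso assms(3)] by blast
  interpret semi_invariant_quartic "conjugate \<sigma> ` G" "\<lambda>x. F (x \<circ> \<sigma>)"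
    using semi_invariant_quartic_conjugate[OF group iso_Sym5(1)[OF iso] \<sigma> mobius assms(4,5)] .
  have "(\<lambda>i. if i < 3 then -1 else if i < 6 then 1 else 0) \<circ> \<sigma> \<in> Sigma10"
    unfolding Sigma10_def using \<sigma> by (auto simp: comp_def)
  then obtain c where c: "c \<noteq> 0" "\<forall>x\<in>hyperplane. F (x \<circ> \<sigma>) = c * Xt_eq (1/6) x"
    using equals_Xt_sixth assms(6) by auto
  have "F x = c * Xt_eq (1/6) x" if "x \<in> hyperplane" for x
  proof -
    have "F x = F ((x \<circ> Hilbert_Choice.inv \<sigma>) \<circ> \<sigma>)" using permutes_inv_o(2)[OF \<sigma>] by (simp add: comp_assoc)
    also have "\<dots> = c * Xt_eq (1/6) (x \<circ> Hilbert_Choice.inv \<sigma>)"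
      using c(2) hyperplane_comp_permutes[OF that permutes_inv[OF \<sigma>]] by blast
    also have "\<dots> = c * Xt_eq (1/6) x" using Xt_eq_comp_permutes[OF permutes_inv[OF \<sigma>]] by simp
    finally show ?thesis .
  qed
  then show ?thesis using c(1) by blast
qed

end
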